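(* Let $(\Omega,\mathcal{F},P_0)$ be a complete probability space, $\epsilon\in(0,1)$, $\mathcal{C}\subseteq\mathcal{F}$ a sub-$\sigma$-algebra, and $\rho$ a sublinear operator on $L^{2+\epsilon}_{\mathcal{F}}(\Omega,P_0)$ with representation set $\mathcal{P}$, satisfying the standing assumptions below. If $\xi\in L^{4+2\epsilon}_{\mathcal{F}}(\Omega,P_0)$ and $\rho$ is stable, then there exists a constant $M$ such that for any $P\in\mathcal{P}$ $$\inf_{\eta\in L^{2+\epsilon}_{\mathcal{C}}(P_0)}E_P[(\xi-\eta)^2]=\inf_{\eta\in L^{2+\epsilon,M}_{\mathcal{C}}(P_0)}E_P[(\xi-\eta)^2],$$ where $L^{2+\epsilon,M}_{\mathcal{C}}(P_0)=\{\eta\in L^{2+\epsilon}_{\mathcal{C}}(P_0):\|\eta\|_{L^{2+\epsilon}(P_0)}\le M\}$.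
   Context: A sublinear operator is a map $\rho:L^{2+\epsilon}_{\mathcal{F}}(\Omega,P_0)\to\mathbb{R}$ that is monotone, constant preserving, sub-additive and positively homogeneous. Its representation set $\mathcal{P}$ is the family of all linear expectations (identified with probability measures $P$) dominated by $\rho$, so $\rho(\xi)=\max_{P\in\mathcal{P}}E_P[\xi]$. Write $f^P=dP/dP_0$, $\mathcal{D}=\{f^P:P\in\mathcal{P}\}$. Standing assumptions: every $P\in\mathcal{P}$ is equivalent to $P_0$; $\mathcal{D}$ is norm-bounded in $L^{1+\frac{2}{\epsilon}}_{\mathcal{F}}(P_0)$ and $\sigma(L^{1+\frac{2}{\epsilon}}(P_0),L^{1+\frac{\epsilon}{2}}(P_0))$-compact. $\rho$ is stable if for each $P\in\mathcal{P}$ the random variable $f^P/E_{P_0}[f^P\mid\mathcal{C}]$ lies in $\mathcal{D}$. $L^{2+\epsilon}_{\mathcal{C}}(P_0)$ denotes the $\mathcal{C}$-measurable elements of $L^{2+\epsilon}(P_0)$. *)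

theory Defs
  imports "HOL-Probability.Probability"
begin

definition Lp_set :: "'a measure \<Rightarrow> real \<Rightarrow> ('a \<Rightarrow> real) set" where
  "Lp_set M p = {f. f \<in> borel_measurable M \<and> integrable M (\<lambda>x. \<bar>f x\<bar> powr p)}"

definition Lp_norm :: "'a measure \<Rightarrow> real \<Rightarrow> ('a \<Rightarrow> real) \<Rightarrow> real" where
  "Lp_norm M p f = (\<integral>x. \<bar>f x\<bar> powr p \<partial>M) powr (1 / p)"

definition sublinear_operator :: "'a measure \<Rightarrow> real \<Rightarrow> (('a \<Rightarrow> real) \<Rightarrow> real) \<Rightarrow> bool" where
  "sublinear_operator M p \<rho> \<longleftrightarrow>
     (\<forall>\<xi>\<in>Lp_set M p. \<forall>\<eta>\<in>Lp_set M p. (AE x in M. \<xi> x \<le> \<eta> x) \<longrightarrow> \<rho> \<xi> \<le> \<rho> \<eta>) \<and>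
     (\<forall>c::real. \<rho> (\<lambda>_. c) = c) \<and>
     (\<forall>\<xi>\<in>Lp_set M p. \<forall>\<eta>\<in>Lp_set M p. \<rho> (\<lambda>x. \<xi> x + \<eta> x) \<le> \<rho> \<xi> + \<rho> \<eta>) \<and>
     (\<forall>\<xi>\<in>Lp_set M p. \<forall>a::real. a \<ge> 0 \<longrightarrow> \<rho> (\<lambda>x. a * \<xi> x) = a * \<rho> \<xi>)"

definition rep_set :: "'a measure \<Rightarrow> real \<Rightarrow> (('a \<Rightarrow> real) \<Rightarrow> real) \<Rightarrow> 'a measure set" where
  "rep_set M p \<rho> = {Q. prob_space Q \<and> sets Q = sets M \<and>
      (\<forall>\<xi>\<in>Lp_set M p. integrable Q \<xi> \<and> (\<integral>x. \<xi> x \<partial>Q) \<le> \<rho> \<xi>)}"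

definition dens :: "'a measure \<Rightarrow> 'a measure \<Rightarrow> 'a \<Rightarrow> real" where
  "dens M Q = (\<lambda>x. enn2real (RN_deriv M Q x))"

definition weak_Lp_topology :: "'a measure \<Rightarrow> real \<Rightarrow> real \<Rightarrow> ('a \<Rightarrow> real) topology" where
  "weak_Lp_topology M q q' = topology_generated_by
     {{f \<in> Lp_set M q. (\<integral>x. f x * g x \<partial>M) \<in> U} | g U. g \<in> Lp_set M q' \<and> open U}"

definition stable :: "'a measure \<Rightarrow> 'a measure \<Rightarrow> real \<Rightarrow> (('a \<Rightarrow> real) \<Rightarrow> real) \<Rightarrow> bool" where
  "stable M C p \<rho> \<longleftrightarrow> (\<forall>Q\<in>rep_set M p \<rho>. \<exists>Q'\<in>rep_set M p \<rho>.
      AE x in M. dens M Q' x = dens M Q x / real_cond_exp M C (dens M Q) x)"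

end

theory Submission
  imports Defs
begin

text \<open>Put \<open>p = 2 + \<epsilon>\<close>, \<open>q = 1 + 2/\<epsilon>\<close>, \<open>r = 1 + \<epsilon>/2\<close>; then \<open>1/q + 2/p = 1\<close>,
  \<open>1/q + 1/r = 1\<close> and \<open>p r \<le> 4 + 2 \<epsilon>\<close>. Let \<open>Q\<close> have density \<open>f\<close> and let \<open>c = E[f | C]\<close>.
  Stability provides \<open>Q'\<close> with density \<open>f' = f / c\<close>, so \<open>dQ = c dQ'\<close> with a
  \<open>C\<close>-measurable \<open>c\<close>. Hence \<open>\<eta> = E_Q'[\<xi> | C]\<close> is also a conditional expectation of
  \<open>\<xi>\<close> under \<open>Q\<close>, so it minimises \<open>E_Q[(\<xi> - \<eta>)^2]\<close> over all \<open>C\<close>-measurable \<open>\<eta>\<close>.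
  Moreover \<open>E[f' | C] = 1\<close>, i.e. \<open>Q'\<close> agrees with \<open>P_0\<close> on \<open>C\<close>, so Jensen's inequality gives
  \<open>E|\<eta>|^p = E_Q'|\<eta>|^p \<le> E_Q'|\<xi>|^p = E[f' |\<xi>|^p] \<le> E|f'|^q + E|\<xi>|^(p r)\<close>,
  a bound uniform in \<open>Q\<close> by the norm bound on the densities.\<close>

lemma le_powr_inverse_of_powr_le:
  fixes x a m :: real
  assumes "0 \<le> x" "0 < a" "x powr a \<le> m"
  shows "x \<le> m powr (1 / a)"
proof -
  have "x = (x powr a) powr (1 / a)"
    using assms by (simp add: powr_powr)
  also have "\<dots> \<le> m powr (1 / a)"
    using assms by (intro powr_mono2) auto
  finally show ?thesis .
qed

text \<open>Crude Young inequalities: each factor is at most a root of the largest power.\<close>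

lemma mult_le_powr_add:
  fixes x y a b :: real
  assumes "0 \<le> x" "0 \<le> y" "0 < a" "0 < b" "1/a + 1/b = 1"
  shows "x * y \<le> x powr a + y powr b"
proof -
  define m where "m = max (x powr a) (y powr b)"
  have "x * y \<le> m powr (1/a) * m powr (1/b)"
    using assms by (intro mult_mono le_powr_inverse_of_powr_le) (auto simp: m_def le_max_iff_disj)
  also have "\<dots> = m"
    using assms by (simp add: m_def le_max_iff_disj flip: powr_add)
  also have "\<dots> \<le> x powr a + y powr b"
    unfolding m_def by simp
  finally show ?thesis .
qed

lemma mult3_le_powr_add:
  fixes x y z a b c :: real
  assumes "0 \<le> x" "0 \<le> y" "0 \<le> z" "0 < a" "0 < b" "0 < c" "1/a + 1/b + 1/c = 1"
  shows "x * y * z \<le> x powr a + y powr b + z powr c"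
proof -
  define m where "m = max (x powr a) (max (y powr b) (z powr c))"
  have "x * y * z \<le> m powr (1/a) * m powr (1/b) * m powr (1/c)"
    using assms by (intro mult_mono le_powr_inverse_of_powr_le) (auto simp: m_def le_max_iff_disj)
  also have "\<dots> = m"
    using assms by (simp add: m_def le_max_iff_disj flip: powr_add)
  also have "\<dots> \<le> x powr a + y powr b + z powr c"
    unfolding m_def by simp
  finally show ?thesis .
qed

lemma convex_on_abs_powr:
  fixes p :: real
  assumes "1 \<le> p"
  shows "convex_on UNIV (\<lambda>t. \<bar>t\<bar> powr p)"
proof -
  have nonneg: "((1 - u) * a + u * b) powr p \<le> (1 - u) * a powr p + u * b powr p"
    if ab: "0 \<le> a" "0 \<le> b" and u: "0 < u" "u < 1" for a b u :: real
  proof -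
    have shrink: "(t * s) powr p \<le> t * s powr p" if "0 \<le> t" "t \<le> 1" "0 \<le> s" for t s :: real
    proof -
      have "t powr p \<le> t"
        using powr_le_one_le[of t p] that assms by (cases "t = 0") auto
      then show ?thesis
        using that by (simp add: powr_mult mult_right_mono)
    qed
    consider "a = 0" | "b = 0" | "0 < a" "0 < b"
      using ab by linarith
    then show ?thesis
    proof cases
      case 1
      then show ?thesis using shrink[of u b] ab u by simp
    next
      case 2
      then show ?thesis using shrink[of "1 - u" a] ab u by simp
    next
      case 3
      then show ?thesis
        using convex_onD[OF powr_convex[OF assms], of u a b] u by simp
    qed
  qed
  show ?thesis
  proof (rule convex_onI)
    fix u x y :: real
    assume u: "0 < u" "u < 1"
    have "\<bar>(1 - u) * x + u * y\<bar> \<le> (1 - u) * \<bar>x\<bar> + u * \<bar>y\<bar>"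
      using u by (metis abs_mult abs_of_pos abs_triangle_ineq diff_gt_0_iff_gt)
    then have "\<bar>(1 - u) * x + u * y\<bar> powr p \<le> ((1 - u) * \<bar>x\<bar> + u * \<bar>y\<bar>) powr p"
      using assms by (intro powr_mono2) auto
    also have "\<dots> \<le> (1 - u) * \<bar>x\<bar> powr p + u * \<bar>y\<bar> powr p"
      using u by (intro nonneg) auto
    finally show "\<bar>(1 - u) *\<^sub>R x + u *\<^sub>R y\<bar> powr p \<le> (1 - u) * \<bar>x\<bar> powr p + u * \<bar>y\<bar> powr p"
      by simp
  qed simp
qed

lemma Lp_set_measurable: "f \<in> Lp_set M p \<Longrightarrow> f \<in> borel_measurable M"
  by (simp add: Lp_set_def)

lemma Lp_set_integrable: "f \<in> Lp_set M p \<Longrightarrow> integrable M (\<lambda>x. \<bar>f x\<bar> powr p)"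
  by (simp add: Lp_set_def)

lemma Lp_set_integrable_bound:
  fixes g :: "'a \<Rightarrow> real"
  assumes "f \<in> borel_measurable M" "integrable M g" "\<And>x. \<bar>f x\<bar> powr p \<le> g x"
  shows "f \<in> Lp_set M p"
proof -
  have "integrable M (\<lambda>x. \<bar>f x\<bar> powr p)"
  proof (rule Bochner_Integration.integrable_bound[OF assms(2)])
    show "AE x in M. norm (\<bar>f x\<bar> powr p) \<le> norm (g x)"
      using assms(3) abs_ge_self by (intro AE_I2) (force intro: order_trans)
  qed (use assms(1) in measurable)
  with assms(1) show ?thesis
    by (simp add: Lp_set_def)
qed

lemma Lp_set_mono:
  assumes "finite_measure M" "f \<in> Lp_set M s" "0 \<le> r" "r \<le> s"
  shows "f \<in> Lp_set M r"
proof (rule Lp_set_integrable_bound)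
  interpret finite_measure M by fact
  show "f \<in> borel_measurable M" "integrable M (\<lambda>x. 1 + \<bar>f x\<bar> powr s)"
    using assms(2) by (auto simp: Lp_set_measurable Lp_set_integrable)
  show "\<bar>f x\<bar> powr r \<le> 1 + \<bar>f x\<bar> powr s" for x
  proof (cases "\<bar>f x\<bar> \<le> 1")
    case True
    then have "\<bar>f x\<bar> powr r \<le> 1"
      using assms(3) by (intro powr_le1) auto
    then show ?thesis by (simp add: add_increasing2)
  next
    case False
    then have "\<bar>f x\<bar> powr r \<le> \<bar>f x\<bar> powr s"
      using assms(4) by (intro powr_mono) auto
    then show ?thesis by simp
  qed
qed

lemma Lp_set_diff:
  assumes "f \<in> Lp_set M p" "g \<in> Lp_set M p" "0 \<le> p"
  shows "(\<lambda>x. f x - g x) \<in> Lp_set M p"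
proof (rule Lp_set_integrable_bound)
  note [measurable] = assms(1,2)[THEN Lp_set_measurable]
  show "(\<lambda>x. f x - g x) \<in> borel_measurable M"
    by measurable
  show "integrable M (\<lambda>x. 2 powr p * (\<bar>f x\<bar> powr p + \<bar>g x\<bar> powr p))"
    using assms by (intro integrable_mult_right Bochner_Integration.integrable_add Lp_set_integrable)
  show "\<bar>f x - g x\<bar> powr p \<le> 2 powr p * (\<bar>f x\<bar> powr p + \<bar>g x\<bar> powr p)" for x
  proof -
    have "\<bar>f x - g x\<bar> powr p \<le> (2 * max \<bar>f x\<bar> \<bar>g x\<bar>) powr p"
      using assms(3) by (intro powr_mono2) auto
    also have "\<dots> = 2 powr p * max \<bar>f x\<bar> \<bar>g x\<bar> powr p"
      by (simp add: powr_mult)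
    also have "max \<bar>f x\<bar> \<bar>g x\<bar> powr p \<le> \<bar>f x\<bar> powr p + \<bar>g x\<bar> powr p"
      by (simp add: max_def)
    finally show ?thesis
      by (simp add: mult_left_mono)
  qed
qed

lemma abs_powr_in_Lp_set:
  assumes "f \<in> Lp_set M (p * r)"
  shows "(\<lambda>x. \<bar>f x\<bar> powr p) \<in> Lp_set M r"
proof -
  note [measurable] = Lp_set_measurable[OF assms]
  have "(\<lambda>x. \<bar>f x\<bar> powr p) \<in> borel_measurable M"
    by measurable
  with assms show ?thesis
    by (simp add: Lp_set_def powr_powr)
qed

lemma integrable_mult_Lp_set:
  fixes f g :: "'a \<Rightarrow> real"
  assumes "f \<in> Lp_set M a" "g \<in> Lp_set M b" "0 < a" "0 < b" "1/a + 1/b = 1"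
  shows "integrable M (\<lambda>x. f x * g x)"
proof (rule Bochner_Integration.integrable_bound)
  show "integrable M (\<lambda>x. \<bar>f x\<bar> powr a + \<bar>g x\<bar> powr b)"
    using assms by (intro Bochner_Integration.integrable_add Lp_set_integrable)
  note [measurable] = assms(1,2)[THEN Lp_set_measurable]
  show "(\<lambda>x. f x * g x) \<in> borel_measurable M"
    by measurable
  show "AE x in M. norm (f x * g x) \<le> norm (\<bar>f x\<bar> powr a + \<bar>g x\<bar> powr b)"
    using assms by (intro AE_I2) (simp add: abs_mult mult_le_powr_add)
qed

lemma integrable_mult3_Lp_set:
  fixes f g h :: "'a \<Rightarrow> real"
  assumes "f \<in> Lp_set M a" "g \<in> Lp_set M b" "h \<in> Lp_set M c"
    "0 < a" "0 < b" "0 < c" "1/a + 1/b + 1/c = 1"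
  shows "integrable M (\<lambda>x. f x * g x * h x)"
proof (rule Bochner_Integration.integrable_bound)
  show "integrable M (\<lambda>x. \<bar>f x\<bar> powr a + \<bar>g x\<bar> powr b + \<bar>h x\<bar> powr c)"
    using assms by (intro Bochner_Integration.integrable_add Lp_set_integrable)
  note [measurable] = assms(1-3)[THEN Lp_set_measurable]
  show "(\<lambda>x. f x * g x * h x) \<in> borel_measurable M"
    by measurable
  show "AE x in M. norm (f x * g x * h x) \<le> norm (\<bar>f x\<bar> powr a + \<bar>g x\<bar> powr b + \<bar>h x\<bar> powr c)"
    using assms by (intro AE_I2) (simp add: abs_mult mult3_le_powr_add)
qed

lemma integral_mult_le_Lp_set:
  fixes f g :: "'a \<Rightarrow> real"
  assumes "f \<in> Lp_set M a" "g \<in> Lp_set M b" "0 < a" "0 < b" "1/a + 1/b = 1"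
  shows "(\<integral>x. f x * g x \<partial>M) \<le> (\<integral>x. \<bar>f x\<bar> powr a \<partial>M) + (\<integral>x. \<bar>g x\<bar> powr b \<partial>M)"
proof -
  have "(\<integral>x. f x * g x \<partial>M) \<le> (\<integral>x. \<bar>f x\<bar> powr a + \<bar>g x\<bar> powr b \<partial>M)"
  proof (rule integral_mono)
    show "integrable M (\<lambda>x. f x * g x)"
      using assms by (rule integrable_mult_Lp_set)
    show "integrable M (\<lambda>x. \<bar>f x\<bar> powr a + \<bar>g x\<bar> powr b)"
      using assms by (intro Bochner_Integration.integrable_add Lp_set_integrable)
    show "f x * g x \<le> \<bar>f x\<bar> powr a + \<bar>g x\<bar> powr b" for x
      using mult_le_powr_add[of "\<bar>f x\<bar>" "\<bar>g x\<bar>" a b] assms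
      by (simp add: abs_mult[symmetric])
  qed
  also have "\<dots> = (\<integral>x. \<bar>f x\<bar> powr a \<partial>M) + (\<integral>x. \<bar>g x\<bar> powr b \<partial>M)"
    using assms by (intro Bochner_Integration.integral_add Lp_set_integrable)
  finally show ?thesis .
qed

lemma integral_abs_powr_le_of_Lp_norm_le:
  assumes "0 < p" "Lp_norm M p f \<le> K"
  shows "(\<integral>x. \<bar>f x\<bar> powr p \<partial>M) \<le> max K 0 powr p"
proof -
  define I where "I = (\<integral>x. \<bar>f x\<bar> powr p \<partial>M)"
  have "0 \<le> I"
    unfolding I_def by (intro integral_nonneg_AE) simp
  then have "I = (I powr (1 / p)) powr p"
    using assms by (simp add: powr_powr)
  also have "\<dots> \<le> max K 0 powr p"
    using assms by (intro powr_mono2) (auto simp: I_def Lp_norm_def)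
  finally show ?thesis
    unfolding I_def .
qed

lemma Lp_norm_le_of_integral_abs_powr_le:
  assumes "0 < p" "(\<integral>x. \<bar>f x\<bar> powr p \<partial>M) \<le> B"
  shows "Lp_norm M p f \<le> B powr (1 / p)"
  unfolding Lp_norm_def using assms by (intro powr_mono2) (auto intro: integral_nonneg_AE)

lemma dens_nonneg [simp]: "0 \<le> dens M Q x"
  by (simp add: dens_def)

lemma measurable_dens [measurable]: "dens M Q \<in> borel_measurable M"
  unfolding dens_def by measurable

lemma (in sigma_finite_measure) density_dens:
  assumes "sigma_finite_measure Q" "absolutely_continuous M Q" "sets Q = sets M"
  shows "density M (dens M Q) = Q"
proof -
  have "AE x in M. ennreal (dens M Q x) = RN_deriv M Q x"
    using RN_deriv_finite[OF assms] by eventually_elim (simp add: dens_def less_top)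
  then have "density M (dens M Q) = density M (RN_deriv M Q)"
    by (intro density_cong) auto
  also have "\<dots> = Q"
    using assms by (intro density_RN_deriv)
  finally show ?thesis .
qed

lemma (in sigma_finite_measure) AE_dens_neq_0:
  assumes "sigma_finite_measure Q" "absolutely_continuous M Q" "absolutely_continuous Q M"
    "sets Q = sets M"
  shows "AE x in M. dens M Q x \<noteq> 0"
proof -
  define A where "A = {x\<in>space M. dens M Q x = 0}"
  have A [measurable]: "A \<in> sets M"
    unfolding A_def by measurable
  have "emeasure Q A = (\<integral>\<^sup>+x. ennreal (dens M Q x) * indicator A x \<partial>M)"
    by (subst density_dens[OF assms(1,2,4), symmetric]) (simp add: emeasure_density)
  also have "\<dots> = 0"
    by (rule nn_integral_zero') (auto simp: A_def split: split_indicator)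
  finally have "A \<in> null_sets Q"
    using A assms(4) by (simp add: null_sets_def)
  then have "A \<in> null_sets M"
    using assms(3) by (auto simp: absolutely_continuous_def)
  from AE_space AE_not_in[OF this] show ?thesis
    by eventually_elim (auto simp: A_def)
qed

lemma (in sigma_finite_measure) integrable_dens:
  assumes "finite_measure Q" "absolutely_continuous M Q" "sets Q = sets M"
  shows "integrable M (dens M Q)"
proof -
  have "density M (dens M Q) = Q"
    using assms by (intro density_dens finite_measure.sigma_finite_measure)
  then have "integrable (density M (dens M Q)) (\<lambda>_. 1::real)"
    using assms(1) by (simp add: finite_measure.integrable_const)
  then show ?thesis
    by (subst (asm) integrable_density) auto
qed

lemma integral_sq_diff_le_of_orthogonal:
  fixes \<xi> e \<eta> :: "'a \<Rightarrow> real"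
  assumes "integrable N (\<lambda>x. (\<xi> x - e x)\<^sup>2)" "integrable N (\<lambda>x. (\<xi> x - \<eta> x)\<^sup>2)"
    and "integrable N (\<lambda>x. (\<xi> x - e x) * (e x - \<eta> x))"
    and "(\<integral>x. (\<xi> x - e x) * (e x - \<eta> x) \<partial>N) = 0"
  shows "(\<integral>x. (\<xi> x - e x)\<^sup>2 \<partial>N) \<le> (\<integral>x. (\<xi> x - \<eta> x)\<^sup>2 \<partial>N)"
proof -
  have "(\<integral>x. (\<xi> x - e x)\<^sup>2 \<partial>N) = (\<integral>x. (\<xi> x - e x)\<^sup>2 + 2 * ((\<xi> x - e x) * (e x - \<eta> x)) \<partial>N)"
    using assms by simp
  also have "\<dots> \<le> (\<integral>x. (\<xi> x - \<eta> x)\<^sup>2 \<partial>N)"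
  proof (rule integral_mono)
    show "(\<xi> x - e x)\<^sup>2 + 2 * ((\<xi> x - e x) * (e x - \<eta> x)) \<le> (\<xi> x - \<eta> x)\<^sup>2" for x
      using zero_le_power2[of "e x - \<eta> x"] by (simp add: power2_eq_square algebra_simps)
  qed (use assms in auto)
  finally show ?thesis .
qed

context sigma_finite_subalgebra
begin

text \<open>Conditional expectations are unchanged by a change of measure whose density is
  measurable with respect to the conditioning algebra.\<close>

lemma integral_density_real_cond_exp:
  fixes c g \<xi> :: "'a \<Rightarrow> real"
  assumes [measurable]: "c \<in> borel_measurable F" "g \<in> borel_measurable F" "\<xi> \<in> borel_measurable M"
    and "AE x in M. 0 \<le> c x" "integrable (density M c) (\<lambda>x. g x * \<xi> x)"
  shows "(\<integral>x. g x * \<xi> x \<partial>density M c) = (\<integral>x. g x * real_cond_exp M F \<xi> x \<partial>density M c)"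
proof -
  have [measurable]: "c \<in> borel_measurable M" "g \<in> borel_measurable M"
    using assms(1,2) by (auto intro: measurable_from_subalg[OF subalg])
  have "integrable M (\<lambda>x. (c x * g x) * \<xi> x)"
    using assms(4,5) by (subst (asm) integrable_density) (auto simp: mult.assoc)
  then have "(\<integral>x. (c x * g x) * \<xi> x \<partial>M) = (\<integral>x. (c x * g x) * real_cond_exp M F \<xi> x \<partial>M)"
    by (intro real_cond_exp_intg(2)[symmetric]) auto
  with assms(4) show ?thesis
    by (simp add: integral_density mult.assoc)
qed

lemma real_cond_exp_abs_powr:
  fixes \<xi> :: "'a \<Rightarrow> real"
  assumes "1 \<le> p" "integrable M \<xi>" "integrable M (\<lambda>x. \<bar>\<xi> x\<bar> powr p)"
  shows "integrable M (\<lambda>x. \<bar>real_cond_exp M F \<xi> x\<bar> powr p)"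
    and "(\<integral>x. \<bar>real_cond_exp M F \<xi> x\<bar> powr p \<partial>M) \<le> (\<integral>x. \<bar>\<xi> x\<bar> powr p \<partial>M)"
proof -
  note convex = convex_on_abs_powr[OF assms(1)]
  show integrable: "integrable M (\<lambda>x. \<bar>real_cond_exp M F \<xi> x\<bar> powr p)"
    by (rule integrable_convex_cond_exp[where I = UNIV]) (use assms convex in auto)
  have "(\<integral>x. \<bar>real_cond_exp M F \<xi> x\<bar> powr p \<partial>M)
      \<le> (\<integral>x. real_cond_exp M F (\<lambda>x. \<bar>\<xi> x\<bar> powr p) x \<partial>M)"
    by (intro integral_mono_AE integrable real_cond_exp_int(1) assms
        real_cond_exp_jensens_inequality(2)[where I = UNIV]) (use assms convex in auto)
  also have "\<dots> = (\<integral>x. \<bar>\<xi> x\<bar> powr p \<partial>M)"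
    by (rule real_cond_exp_int(2)[OF assms(3)])
  finally show "(\<integral>x. \<bar>real_cond_exp M F \<xi> x\<bar> powr p \<partial>M) \<le> (\<integral>x. \<bar>\<xi> x\<bar> powr p \<partial>M)" .
qed

end

lemma restr_to_subalg_eqI:
  assumes "subalgebra M F" "subalgebra N F" "\<And>A. A \<in> sets F \<Longrightarrow> emeasure M A = emeasure N A"
  shows "restr_to_subalg M F = restr_to_subalg N F"
  using assms by (intro measure_eqI) (simp_all add: sets_restr_to_subalg emeasure_restr_to_subalg)

locale conditional_normalization = prob_space M for M :: "'a measure" +
  fixes C Q Q' :: "'a measure"
  assumes subalg: "subalgebra M C"
    and prob_Q: "prob_space Q" and sets_Q: "sets Q = sets M"
    and ac_Q: "absolutely_continuous M Q"
    and prob_Q': "prob_space Q'" and sets_Q': "sets Q' = sets M"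
    and ac_Q': "absolutely_continuous M Q'" and ac_Q'_M: "absolutely_continuous Q' M"
    and dens_Q'_eq: "AE x in M. dens M Q' x = dens M Q x / real_cond_exp M C (dens M Q) x"
begin

sublocale finite_measure_subalgebra M C
  using subalg by unfold_locales

lemma subalgebra_Q': "subalgebra Q' C"
  using subalg sets_Q' sets_eq_imp_space_eq[OF sets_Q'] by (simp add: subalgebra_def)

lemma finite_measure_subalgebra_Q': "finite_measure_subalgebra Q' C"
  using subalgebra_Q' prob_Q' by (simp add: finite_measure_subalgebra_def
      finite_measure_subalgebra_axioms_def prob_space.finite_measure)

lemma density_dens_Q: "density M (dens M Q) = Q"
  using prob_Q sets_Q ac_Q by (intro density_dens prob_space_imp_sigma_finite)

lemma density_dens_Q': "density M (dens M Q') = Q'"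
  using prob_Q' sets_Q' ac_Q' by (intro density_dens prob_space_imp_sigma_finite)

lemma dens_Q_eq:
  "AE x in M. dens M Q x = real_cond_exp M C (dens M Q) x * dens M Q' x"
  and AE_real_cond_exp_dens_neq_0:
  "AE x in M. real_cond_exp M C (dens M Q) x \<noteq> 0"
proof -
  have "AE x in M. dens M Q' x \<noteq> 0"
    using prob_Q' ac_Q' ac_Q'_M sets_Q' by (intro AE_dens_neq_0 prob_space_imp_sigma_finite)
  with dens_Q'_eq
  show "AE x in M. dens M Q x = real_cond_exp M C (dens M Q) x * dens M Q' x"
    and "AE x in M. real_cond_exp M C (dens M Q) x \<noteq> 0"
    by (eventually_elim, auto)+
qed

lemma density_real_cond_exp_dens: "density Q' (real_cond_exp M C (dens M Q)) = Q"
proof -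
  have "AE x in M. 0 \<le> real_cond_exp M C (dens M Q) x"
    by (intro real_cond_exp_pos) auto
  then have "AE x in M. ennreal (dens M Q' x) * ennreal (real_cond_exp M C (dens M Q) x)
      = ennreal (dens M Q x)"
    using dens_Q_eq by eventually_elim (simp add: ennreal_mult'[symmetric] mult.commute)
  then have "density M (\<lambda>x. ennreal (dens M Q' x) * ennreal (real_cond_exp M C (dens M Q) x))
      = density M (dens M Q)"
    by (intro density_cong) (auto intro: measurable_from_subalg[OF subalg])
  then have "density (density M (dens M Q')) (real_cond_exp M C (dens M Q)) = density M (dens M Q)"
    by (simp add: density_density_eq measurable_from_subalg[OF subalg])
  then show ?thesis
    by (simp only: density_dens_Q density_dens_Q')
qed

text \<open>On sets in \<open>C\<close> the numerator of \<open>dens M Q' = dens M Q / c\<close> may be replaced by its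
  conditional expectation \<open>c\<close>, so the quotient integrates like \<open>1\<close>.\<close>

lemma emeasure_Q'_subalg:
  assumes "A \<in> sets C"
  shows "emeasure Q' A = emeasure M A"
proof -
  define c where "c = real_cond_exp M C (dens M Q)"
  note [measurable] = assms
  have [measurable]: "A \<in> sets M"
    using assms subalg by (auto simp: subalgebra_def)
  have [measurable]: "c \<in> borel_measurable C" "c \<in> borel_measurable M"
    by (simp_all add: c_def)
  have AE_eq: "AE x in M. indicator A x / c x * dens M Q x = indicator A x * dens M Q' x"
    "AE x in M. indicator A x / c x * c x = indicator A x"
    using dens_Q_eq AE_real_cond_exp_dens_neq_0 unfolding c_def by (eventually_elim, simp)+
  have "integrable M (dens M Q')"
    using prob_Q' ac_Q' sets_Q' by (intro integrable_dens prob_space.finite_measure)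
  then have int_Q': "integrable M (\<lambda>x. indicator A x * dens M Q' x)"
    using integrable_mult_indicator[of A M "dens M Q'"] by simp
  have int_Q: "integrable M (\<lambda>x. indicator A x / c x * dens M Q x)"
    by (rule integrable_cong_AE[THEN iffD2, OF _ _ AE_eq(1) int_Q']) measurable
  have "(\<integral>x. indicator A x / c x * c x \<partial>M) = measure M A"
    by (subst integral_cong_AE[OF _ _ AE_eq(2)]) simp_all
  moreover have "(\<integral>x. indicator A x / c x * c x \<partial>M) = (\<integral>x. indicator A x / c x * dens M Q x \<partial>M)"
    unfolding c_def by (rule real_cond_exp_intg(2)[OF int_Q[unfolded c_def]]) simp_all
  moreover have "\<dots> = (\<integral>x. indicator A x * dens M Q' x \<partial>M)"
    by (rule integral_cong_AE[OF _ _ AE_eq(1)]) measurable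
  ultimately have "(\<integral>x. indicator A x * dens M Q' x \<partial>M) = measure M A"
    by simp
  then have "(\<integral>\<^sup>+x. ennreal (indicator A x * dens M Q' x) \<partial>M) = emeasure M A"
    using int_Q' by (simp add: nn_integral_eq_integral emeasure_eq_measure)
  moreover have "(\<integral>\<^sup>+x. ennreal (indicator A x * dens M Q' x) \<partial>M) = emeasure Q' A"
    by (subst density_dens_Q'[symmetric])
      (auto simp: emeasure_density intro!: nn_integral_cong split: split_indicator)
  ultimately show ?thesis
    by simp
qed

lemma restr_to_subalg_Q': "restr_to_subalg Q' C = restr_to_subalg M C"
  by (intro restr_to_subalg_eqI subalgebra_Q' subalg emeasure_Q'_subalg)

lemma integrable_Q'_subalg_iff:
  fixes h :: "'a \<Rightarrow> real"
  assumes "h \<in> borel_measurable C"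
  shows "integrable Q' h \<longleftrightarrow> integrable M h"
  using assms subalg subalgebra_Q' restr_to_subalg_Q'
  by (metis integrable_from_subalg integrable_in_subalg)

lemma integral_Q'_subalg:
  fixes h :: "'a \<Rightarrow> real"
  assumes "h \<in> borel_measurable C"
  shows "(\<integral>x. h x \<partial>Q') = (\<integral>x. h x \<partial>M)"
  using assms subalg subalgebra_Q' restr_to_subalg_Q' by (metis integral_subalgebra2)

lemma integral_mult_real_cond_exp_Q':
  fixes g \<xi> :: "'a \<Rightarrow> real"
  assumes [measurable]: "g \<in> borel_measurable C" "\<xi> \<in> borel_measurable M"
    and "integrable Q (\<lambda>x. g x * \<xi> x)"
  shows "(\<integral>x. g x * \<xi> x \<partial>Q) = (\<integral>x. g x * real_cond_exp Q' C \<xi> x \<partial>Q)"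
proof -
  interpret Q': finite_measure_subalgebra Q' C
    by (rule finite_measure_subalgebra_Q')
  have "AE x in M. 0 \<le> real_cond_exp M C (dens M Q) x"
    by (intro real_cond_exp_pos) auto
  then have "AE x in Q'. 0 \<le> real_cond_exp M C (dens M Q) x"
    by (rule absolutely_continuous_AE[OF sets_Q' ac_Q'])
  moreover have "\<xi> \<in> borel_measurable Q'"
    using sets_Q' by (simp cong: measurable_cong_sets)
  ultimately show ?thesis
    using Q'.integral_density_real_cond_exp[of "real_cond_exp M C (dens M Q)" g \<xi>] assms(3)
    by (simp add: density_real_cond_exp_dens)
qed

lemma real_cond_exp_Q'_abs_powr:
  fixes \<xi> :: "'a \<Rightarrow> real"
  assumes "1 \<le> p" "integrable Q' \<xi>" "integrable Q' (\<lambda>x. \<bar>\<xi> x\<bar> powr p)"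
  shows "integrable M (\<lambda>x. \<bar>real_cond_exp Q' C \<xi> x\<bar> powr p)"
    and "(\<integral>x. \<bar>real_cond_exp Q' C \<xi> x\<bar> powr p \<partial>M) \<le> (\<integral>x. \<bar>\<xi> x\<bar> powr p \<partial>Q')"
proof -
  interpret Q': finite_measure_subalgebra Q' C
    by (rule finite_measure_subalgebra_Q')
  have [measurable]: "(\<lambda>x. \<bar>real_cond_exp Q' C \<xi> x\<bar> powr p) \<in> borel_measurable C"
    by measurable
  show "integrable M (\<lambda>x. \<bar>real_cond_exp Q' C \<xi> x\<bar> powr p)"
    using Q'.real_cond_exp_abs_powr(1)[OF assms] by (simp add: integrable_Q'_subalg_iff)
  show "(\<integral>x. \<bar>real_cond_exp Q' C \<xi> x\<bar> powr p \<partial>M) \<le> (\<integral>x. \<bar>\<xi> x\<bar> powr p \<partial>Q')"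
    using Q'.real_cond_exp_abs_powr(2)[OF assms] by (simp add: integral_Q'_subalg)
qed

lemma integrable_Q_mult_Lp_set:
  fixes u v :: "'a \<Rightarrow> real"
  assumes "0 < p" "0 < q" "1/q + 2/p = 1" "dens M Q \<in> Lp_set M q"
    and "u \<in> Lp_set M p" "v \<in> Lp_set M p"
  shows "integrable Q (\<lambda>x. u x * v x)"
proof -
  note [measurable] = assms(5,6)[THEN Lp_set_measurable]
  have "integrable M (\<lambda>x. dens M Q x * u x * v x)"
    using assms by (intro integrable_mult3_Lp_set[where a = q and b = p and c = p]) auto
  then show ?thesis
    by (subst density_dens_Q[symmetric]) (simp add: integrable_density mult.assoc)
qed

lemma real_cond_exp_Q'_minimizes:
  fixes \<xi> \<eta> :: "'a \<Rightarrow> real"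
  assumes "0 < p" "0 < q" "1/q + 2/p = 1" "dens M Q \<in> Lp_set M q"
    and "\<xi> \<in> Lp_set M p" "real_cond_exp Q' C \<xi> \<in> Lp_set M p"
    and "\<eta> \<in> Lp_set M p" "\<eta> \<in> borel_measurable C"
  shows "(\<integral>x. (\<xi> x - real_cond_exp Q' C \<xi> x)\<^sup>2 \<partial>Q) \<le> (\<integral>x. (\<xi> x - \<eta> x)\<^sup>2 \<partial>Q)"
proof (rule integral_sq_diff_le_of_orthogonal)
  let ?e = "real_cond_exp Q' C \<xi>"
  note integrable = integrable_Q_mult_Lp_set[OF assms(1-4)]
  note [measurable] = Lp_set_measurable[OF assms(5)] assms(8)
  have diff_in: "(\<lambda>x. \<xi> x - ?e x) \<in> Lp_set M p" "(\<lambda>x. \<xi> x - \<eta> x) \<in> Lp_set M p"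
    "(\<lambda>x. ?e x - \<eta> x) \<in> Lp_set M p"
    using assms by (simp_all add: Lp_set_diff)
  show "integrable Q (\<lambda>x. (\<xi> x - ?e x)\<^sup>2)" "integrable Q (\<lambda>x. (\<xi> x - \<eta> x)\<^sup>2)"
    "integrable Q (\<lambda>x. (\<xi> x - ?e x) * (?e x - \<eta> x))"
    using integrable[OF diff_in(1) diff_in(1)] integrable[OF diff_in(2) diff_in(2)]
      integrable[OF diff_in(1) diff_in(3)] by (simp_all add: power2_eq_square)
  have int: "integrable Q (\<lambda>x. (?e x - \<eta> x) * \<xi> x)" "integrable Q (\<lambda>x. (?e x - \<eta> x) * ?e x)"
    using integrable[OF diff_in(3) assms(5)] integrable[OF diff_in(3) assms(6)] by simp_all
  have "(\<integral>x. (\<xi> x - ?e x) * (?e x - \<eta> x) \<partial>Q)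
      = (\<integral>x. (?e x - \<eta> x) * \<xi> x \<partial>Q) - (\<integral>x. (?e x - \<eta> x) * ?e x \<partial>Q)"
    using int by (subst Bochner_Integration.integral_diff[symmetric]) (simp_all add: algebra_simps)
  also have "\<dots> = 0"
    using int(1) by (simp add: integral_mult_real_cond_exp_Q')
  finally show "(\<integral>x. (\<xi> x - ?e x) * (?e x - \<eta> x) \<partial>Q) = 0" .
qed

lemma exists_bounded_minimizer:
  fixes \<xi> :: "'a \<Rightarrow> real"
  assumes "1 \<le> p" "0 < q" "0 < r" "1/q + 2/p = 1" "1/q + 1/r = 1"
    and "dens M Q \<in> Lp_set M q" "dens M Q' \<in> Lp_set M q" "Lp_norm M q (dens M Q') \<le> K"
    and "\<xi> \<in> Lp_set M (p * r)"
  shows "\<exists>e\<in>Lp_set M p. e \<in> borel_measurable C \<and>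
    Lp_norm M p e \<le> (max K 0 powr q + (\<integral>x. \<bar>\<xi> x\<bar> powr (p * r) \<partial>M)) powr (1 / p) \<and>
    (\<forall>\<eta>\<in>Lp_set M p. \<eta> \<in> borel_measurable C \<longrightarrow>
      (\<integral>x. (\<xi> x - e x)\<^sup>2 \<partial>Q) \<le> (\<integral>x. (\<xi> x - \<eta> x)\<^sup>2 \<partial>Q))"
proof (intro bexI conjI ballI impI)
  have "1 / r < 1"
    using assms(2,5) by (smt (verit) divide_pos_pos)
  then have "1 < r"
    using assms(3) by (simp add: divide_less_eq)
  then have \<xi>_p: "\<xi> \<in> Lp_set M p" and \<xi>_r: "\<xi> \<in> Lp_set M r"
    using assms(1,9) by (auto intro: Lp_set_mono[OF finite_measure_axioms])
  have \<xi>_powr: "(\<lambda>x. \<bar>\<xi> x\<bar> powr p) \<in> Lp_set M r"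
    using assms(9) by (rule abs_powr_in_Lp_set)
  note [measurable] = Lp_set_measurable[OF \<xi>_p]
  have integrable_Q': "integrable Q' h" if "h \<in> Lp_set M r" for h
  proof -
    note [measurable] = Lp_set_measurable[OF that]
    have "integrable M (\<lambda>x. dens M Q' x * h x)"
      using assms that by (intro integrable_mult_Lp_set) auto
    then show ?thesis
      by (subst density_dens_Q'[symmetric]) (simp add: integrable_density)
  qed
  note bound = real_cond_exp_Q'_abs_powr[OF assms(1) integrable_Q'[OF \<xi>_r] integrable_Q'[OF \<xi>_powr]]
  show e_p: "real_cond_exp Q' C \<xi> \<in> Lp_set M p"
    using bound(1) measurable_from_subalg[OF subalg borel_measurable_cond_exp]
    by (simp add: Lp_set_def)
  show "real_cond_exp Q' C \<xi> \<in> borel_measurable C"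
    by simp
  have "(\<integral>x. \<bar>real_cond_exp Q' C \<xi> x\<bar> powr p \<partial>M) \<le> (\<integral>x. \<bar>\<xi> x\<bar> powr p \<partial>Q')"
    by (rule bound(2))
  also have "\<dots> = (\<integral>x. dens M Q' x * \<bar>\<xi> x\<bar> powr p \<partial>M)"
    by (subst density_dens_Q'[symmetric]) (simp add: integral_density)
  also have "\<dots> \<le> (\<integral>x. \<bar>dens M Q' x\<bar> powr q \<partial>M) + (\<integral>x. \<bar>\<bar>\<xi> x\<bar> powr p\<bar> powr r \<partial>M)"
    using assms \<xi>_powr by (intro integral_mult_le_Lp_set) auto
  also have "\<dots> \<le> max K 0 powr q + (\<integral>x. \<bar>\<xi> x\<bar> powr (p * r) \<partial>M)"
    using integral_abs_powr_le_of_Lp_norm_le[OF assms(2,8)] by (simp add: powr_powr)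
  finally show "Lp_norm M p (real_cond_exp Q' C \<xi>)
      \<le> (max K 0 powr q + (\<integral>x. \<bar>\<xi> x\<bar> powr (p * r) \<partial>M)) powr (1 / p)"
    using assms(1) by (intro Lp_norm_le_of_integral_abs_powr_le) auto
  fix \<eta> assume "\<eta> \<in> Lp_set M p" "\<eta> \<in> borel_measurable C"
  then show "(\<integral>x. (\<xi> x - real_cond_exp Q' C \<xi> x)\<^sup>2 \<partial>Q) \<le> (\<integral>x. (\<xi> x - \<eta> x)\<^sup>2 \<partial>Q)"
    using assms(1,2,4,6) \<xi>_p e_p by (intro real_cond_exp_Q'_minimizes) auto
qed

end

lemma rep_set_conditional_normalization:
  assumes "prob_space M" "subalgebra M C" "stable M C p \<rho>" "Q \<in> rep_set M p \<rho>"
    and "\<forall>Q\<in>rep_set M p \<rho>. absolutely_continuous M Q \<and> absolutely_continuous Q M"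
  obtains Q' where "Q' \<in> rep_set M p \<rho>" "conditional_normalization M C Q Q'"
proof -
  obtain Q' where Q': "Q' \<in> rep_set M p \<rho>"
    and "AE x in M. dens M Q' x = dens M Q x / real_cond_exp M C (dens M Q) x"
    using assms(3,4) unfolding stable_def by blast
  moreover have "prob_space Q" "sets Q = sets M" "prob_space Q'" "sets Q' = sets M"
    using assms(4) Q' unfolding rep_set_def by blast+
  ultimately have "conditional_normalization M C Q Q'"
    using assms by (simp add: conditional_normalization_def conditional_normalization_axioms_def)
  with Q' show ?thesis
    by (rule that)
qed

lemma INF_eq_INF_of_minimizer:
  fixes F :: "'b \<Rightarrow> real"
  assumes "e \<in> B" "B \<subseteq> A" "\<And>\<eta>. \<eta> \<in> A \<Longrightarrow> F e \<le> F \<eta>"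
  shows "(INF \<eta>\<in>A. F \<eta>) = (INF \<eta>\<in>B. F \<eta>)"
proof -
  have "(INF \<eta>\<in>A. F \<eta>) = F e" "(INF \<eta>\<in>B. F \<eta>) = F e"
    using assms by (auto intro!: cInf_eq_minimum)
  then show ?thesis
    by simp
qed

lemma exponents_of_epsilon:
  fixes \<epsilon> :: real
  assumes "0 < \<epsilon>" "\<epsilon> < 1"
  shows "1 / (1 + 2 / \<epsilon>) + 2 / (2 + \<epsilon>) = 1" "1 / (1 + 2 / \<epsilon>) + 1 / (1 + \<epsilon> / 2) = 1"
    and "(2 + \<epsilon>) * (1 + \<epsilon> / 2) \<le> 4 + 2 * \<epsilon>"
proof -
  have "0 < \<epsilon> * \<epsilon> + (4 + \<epsilon> * 4)"
    using assms by (intro add_pos_pos mult_pos_pos) auto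
  with assms show "1 / (1 + 2 / \<epsilon>) + 2 / (2 + \<epsilon>) = 1" "1 / (1 + 2 / \<epsilon>) + 1 / (1 + \<epsilon> / 2) = 1"
    by (simp_all add: field_simps)
  have "\<epsilon> * \<epsilon> \<le> 1"
    using assms by (intro mult_le_one) auto
  then show "(2 + \<epsilon>) * (1 + \<epsilon> / 2) \<le> 4 + 2 * \<epsilon>"
    by (simp add: algebra_simps)
qed

theorem proposition2:
  fixes M :: "'a measure" and C :: "'a measure" and \<epsilon> :: real
    and \<rho> :: "('a \<Rightarrow> real) \<Rightarrow> real" and \<xi> :: "'a \<Rightarrow> real"
  assumes "prob_space M" and "complete_measure M"
    and "0 < \<epsilon>" and "\<epsilon> < 1"
    and "subalgebra M C"
    and "sublinear_operator M (2 + \<epsilon>) \<rho>"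
    and equiv: "\<forall>Q\<in>rep_set M (2 + \<epsilon>) \<rho>. absolutely_continuous M Q \<and> absolutely_continuous Q M"
    and dens_in_Lq: "\<forall>Q\<in>rep_set M (2 + \<epsilon>) \<rho>. dens M Q \<in> Lp_set M (1 + 2 / \<epsilon>)"
    and bounded: "\<exists>K. \<forall>Q\<in>rep_set M (2 + \<epsilon>) \<rho>. Lp_norm M (1 + 2 / \<epsilon>) (dens M Q) \<le> K"
    and compact: "compactin (weak_Lp_topology M (1 + 2 / \<epsilon>) (1 + \<epsilon> / 2))
                    (dens M ` rep_set M (2 + \<epsilon>) \<rho>)"
    and "\<xi> \<in> Lp_set M (4 + 2 * \<epsilon>)"
    and "stable M C (2 + \<epsilon>) \<rho>"
  shows "\<exists>K::real. \<forall>Q\<in>rep_set M (2 + \<epsilon>) \<rho>.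
    (INF \<eta>\<in>{\<eta>\<in>Lp_set M (2 + \<epsilon>). \<eta> \<in> borel_measurable C}. \<integral>x. (\<xi> x - \<eta> x)\<^sup>2 \<partial>Q) =
    (INF \<eta>\<in>{\<eta>\<in>Lp_set M (2 + \<epsilon>). \<eta> \<in> borel_measurable C \<and> Lp_norm M (2 + \<epsilon>) \<eta> \<le> K}.
       \<integral>x. (\<xi> x - \<eta> x)\<^sup>2 \<partial>Q)"
proof -
  let ?p = "2 + \<epsilon>" and ?q = "1 + 2 / \<epsilon>" and ?r = "1 + \<epsilon> / 2"
  note exponents = exponents_of_epsilon[OF assms(3,4)]
  obtain K\<^sub>D where K\<^sub>D: "\<forall>Q\<in>rep_set M ?p \<rho>. Lp_norm M ?q (dens M Q) \<le> K\<^sub>D"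
    using bounded by blast
  have \<xi>: "\<xi> \<in> Lp_set M (?p * ?r)"
    using assms(3) exponents(3)
    by (intro Lp_set_mono[OF prob_space.finite_measure[OF assms(1)] assms(11)]) auto
  define K where "K = (max K\<^sub>D 0 powr ?q + (\<integral>x. \<bar>\<xi> x\<bar> powr (?p * ?r) \<partial>M)) powr (1 / ?p)"
  have minimizer: "\<exists>e\<in>Lp_set M ?p. e \<in> borel_measurable C \<and> Lp_norm M ?p e \<le> K \<and>
      (\<forall>\<eta>\<in>Lp_set M ?p. \<eta> \<in> borel_measurable C \<longrightarrow>
        (\<integral>x. (\<xi> x - e x)\<^sup>2 \<partial>Q) \<le> (\<integral>x. (\<xi> x - \<eta> x)\<^sup>2 \<partial>Q))"
    if Q: "Q \<in> rep_set M ?p \<rho>" for Q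
  proof -
    obtain Q' where "Q' \<in> rep_set M ?p \<rho>" "conditional_normalization M C Q Q'"
      using rep_set_conditional_normalization[OF assms(1,5,12) Q equiv] .
    then show ?thesis
      using conditional_normalization.exists_bounded_minimizer[of M C Q Q' ?p ?q ?r K\<^sub>D \<xi>]
        assms(3) exponents Q dens_in_Lq K\<^sub>D \<xi> unfolding K_def by (auto simp: add_pos_pos)
  qed
  show ?thesis
    by (intro exI[of _ K] ballI, frule minimizer, elim bexE conjE, rule INF_eq_INF_of_minimizer) auto
qed

end
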